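(* Consider a finite Markov decision process with state set $\mathcal S$, action set $\mathcal A$, transition function $P$, reward function $R$, initial state distribution $d_0$ and discount factor $\gamma\in[0,1)$, together with a finite set of options $\mathcal O$ in which every option $o$ has an intra-option policy $\pi_o(s,a)$, a termination function $\beta_o(s,\vartheta)\in[0,1]$ differentiable in a parameter vector $\vartheta$, and a policy over options $\pi_{\mathcal O}(s,o)$. Let $X'=(O_0,S_1,O_1,S_2,O_2,S_3,\dots)$ be the random state-option transition path (state-option pairs shifted by one time step) generated by the option dynamics described in the context, and for $\mathcal T\in\mathbb N$ let $G^{\mathcal T}_\vartheta$ be the $\mathcal T$-step finite horizon Fisher information matrix with respect to $\vartheta$ of the distribution of this path truncated at time step $\mathcal T$, written in the form $$\big(G^{\mathcal T}_\vartheta\big)_{i,j}=-\mathbb E\Big[\frac{\partial^2\ln\Pr(X'_{0:\mathcal T};\vartheta)}{\partial\vartheta_i\partial\vartheta_j}\Big].$$ Let $\mu_{\mathcal O}(s',o)$ be the stationary distribution of state-option pairs $(s',o)$ (state $s'$ entered while option $o$ is active). Then $$\Big(\lim_{\mathcal T\to\infty}\frac1{\mathcal T}G^{\mathcal T}_\vartheta\Big)_{i,j}=-\sum_{s',o}\mu_{\mathcal O}(s',o)\,\frac{\partial\ln\beta_o(s',\vartheta)}{\partial\vartheta_i}\,\frac{\partial\ln\big(1-\beta_o(s',\vartheta)+\beta_o(s',\vartheta)\pi_{\mathcal O}(s',o)\big)}{\partial\vartheta_j}.$$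
   Context: Option dynamics (option-critic framework, all options available in every state): at time $t$ the agent is in state $S_t$ with active option $O_t$; it draws $A_t\sim\pi_{O_t}(S_t,\cdot)$, receives reward $R_t$ with $\mathbb E[R_t\mid S_t=s,A_t=a]=R(s,a)$, and moves to $S_{t+1}\sim P(S_t,A_t,\cdot)$. The next option is drawn with probability $\Pr(O_{t+1}=o'\mid O_t=o,S_{t+1}=s')=(1-\beta_o(s',\vartheta))\mathbf 1_{o'=o}+\beta_o(s',\vartheta)\pi_{\mathcal O}(s',o')$. The discounted problem is treated as an undiscounted one that terminates with probability $1-\gamma$ at each step. The process is assumed ergodic and irreducible so that the stationary distribution $\mu_{\mathcal O}$ is well defined, and all logarithms appearing are assumed finite (in particular $0<\beta_o(s',\vartheta)$ and $\beta_o(s',\vartheta)(1-\pi_{\mathcal O}(s',o))\neq 0$ where needed). *)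

theory Defs
  imports "HOL-Analysis.Analysis"
begin

definition partial :: "'n::finite \<Rightarrow> (real^'n \<Rightarrow> real) \<Rightarrow> real^'n \<Rightarrow> real" where
  "partial i f v = deriv (\<lambda>t. f (v + t *\<^sub>R axis i 1)) 0"

fun kpow :: "('x::finite \<Rightarrow> 'x \<Rightarrow> real) \<Rightarrow> nat \<Rightarrow> 'x \<Rightarrow> 'x \<Rightarrow> real" where
  "kpow K 0 x y = (if x = y then 1 else 0)"
| "kpow K (Suc n) x y = (\<Sum>z\<in>UNIV. kpow K n x z * K z y)"

definition stochastic_kernel :: "('x::finite \<Rightarrow> 'y::finite \<Rightarrow> real) \<Rightarrow> bool" where
  "stochastic_kernel K \<longleftrightarrow> (\<forall>x y. 0 \<le> K x y) \<and> (\<forall>x. (\<Sum>y\<in>UNIV. K x y) = 1)"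

definition prob_dist :: "('x::finite \<Rightarrow> real) \<Rightarrow> bool" where
  "prob_dist p \<longleftrightarrow> (\<forall>x. 0 \<le> p x) \<and> (\<Sum>x\<in>UNIV. p x) = 1"

definition irreducible_chain :: "('x::finite \<Rightarrow> 'x \<Rightarrow> real) \<Rightarrow> bool" where
  "irreducible_chain K \<longleftrightarrow> (\<forall>x y. \<exists>n>0. kpow K n x y > 0)"

definition aperiodic_chain :: "('x::finite \<Rightarrow> 'x \<Rightarrow> real) \<Rightarrow> bool" where
  "aperiodic_chain K \<longleftrightarrow> (\<forall>x. Gcd {n. n > 0 \<and> kpow K n x x > 0} = 1)"

definition stationary_dist :: "('x::finite \<Rightarrow> 'x \<Rightarrow> real) \<Rightarrow> ('x \<Rightarrow> real) \<Rightarrow> bool" where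
  "stationary_dist K mu \<longleftrightarrow> prob_dist mu \<and> (\<forall>y. (\<Sum>x\<in>UNIV. mu x * K x y) = mu y)"

(* Pr(O_{t+1} = \<omega>' | O_t = \<omega>, S_{t+1} = s') *)
definition opt_trans ::
  "('o \<Rightarrow> 's \<Rightarrow> real^'n \<Rightarrow> real) \<Rightarrow> ('s \<Rightarrow> 'o \<Rightarrow> real) \<Rightarrow> real^'n \<Rightarrow> 'o \<Rightarrow> 's \<Rightarrow> 'o \<Rightarrow> real" where
  "opt_trans \<beta> \<pi>O \<theta> \<omega> s \<omega>' =
     (1 - \<beta> \<omega> s \<theta>) * (if \<omega>' = \<omega> then 1 else 0) + \<beta> \<omega> s \<theta> * \<pi>O s \<omega>'"

(* transition kernel of the state-option pairs X'_t = (S_{t+1}, O_t) -> X'_{t+1} = (S_{t+2}, O_{t+1}) *)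
definition pair_kernel ::
  "('s::finite \<Rightarrow> 'a::finite \<Rightarrow> 's \<Rightarrow> real) \<Rightarrow> ('o::finite \<Rightarrow> 's \<Rightarrow> 'a \<Rightarrow> real) \<Rightarrow>
   ('o \<Rightarrow> 's \<Rightarrow> real^'n \<Rightarrow> real) \<Rightarrow> ('s \<Rightarrow> 'o \<Rightarrow> real) \<Rightarrow> real^'n \<Rightarrow>
   ('s \<times> 'o) \<Rightarrow> ('s \<times> 'o) \<Rightarrow> real" where
  "pair_kernel P \<pi> \<beta> \<pi>O \<theta> x y =
     (case x of (s, \<omega>) \<Rightarrow> case y of (s2, \<omega>2) \<Rightarrow>
        opt_trans \<beta> \<pi>O \<theta> \<omega> s \<omega>2 * (\<Sum>a\<in>UNIV. \<pi> \<omega>2 s a * P s a s2))"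

(* distribution of X'_0 = (S_1, O_0) *)
definition init_pair ::
  "('s::finite \<Rightarrow> real) \<Rightarrow> ('s \<Rightarrow> 'a::finite \<Rightarrow> 's \<Rightarrow> real) \<Rightarrow> ('o::finite \<Rightarrow> 's \<Rightarrow> 'a \<Rightarrow> real) \<Rightarrow>
   ('s \<Rightarrow> 'o \<Rightarrow> real) \<Rightarrow> ('s \<times> 'o) \<Rightarrow> real" where
  "init_pair d0 P \<pi> \<pi>O x =
     (case x of (s1, \<omega>0) \<Rightarrow>
        (\<Sum>s0\<in>UNIV. d0 s0 * \<pi>O s0 \<omega>0 * (\<Sum>a\<in>UNIV. \<pi> \<omega>0 s0 a * P s0 a s1)))"

(* truncated paths X'_{0:T} = (X'_0, ..., X'_T) *)
definition paths :: "nat \<Rightarrow> ('s \<times> 'o) list set" where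
  "paths T = {xs. length xs = Suc T}"

definition path_prob ::
  "('s::finite \<Rightarrow> real) \<Rightarrow> ('s \<Rightarrow> 'a::finite \<Rightarrow> 's \<Rightarrow> real) \<Rightarrow> ('o::finite \<Rightarrow> 's \<Rightarrow> 'a \<Rightarrow> real) \<Rightarrow>
   ('o \<Rightarrow> 's \<Rightarrow> real^'n \<Rightarrow> real) \<Rightarrow> ('s \<Rightarrow> 'o \<Rightarrow> real) \<Rightarrow> real^'n \<Rightarrow> ('s \<times> 'o) list \<Rightarrow> real" where
  "path_prob d0 P \<pi> \<beta> \<pi>O \<theta> xs =
     init_pair d0 P \<pi> \<pi>O (hd xs) *
     (\<Prod>t<length xs - 1. pair_kernel P \<pi> \<beta> \<pi>O \<theta> (xs ! t) (xs ! Suc t))"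

definition fisher_fh ::
  "('s::finite \<Rightarrow> real) \<Rightarrow> ('s \<Rightarrow> 'a::finite \<Rightarrow> 's \<Rightarrow> real) \<Rightarrow> ('o::finite \<Rightarrow> 's \<Rightarrow> 'a \<Rightarrow> real) \<Rightarrow>
   ('o \<Rightarrow> 's \<Rightarrow> real^'n::finite \<Rightarrow> real) \<Rightarrow> ('s \<Rightarrow> 'o \<Rightarrow> real) \<Rightarrow> nat \<Rightarrow> real^'n \<Rightarrow> 'n \<Rightarrow> 'n \<Rightarrow> real" where
  "fisher_fh d0 P \<pi> \<beta> \<pi>O T \<theta> i j =
     - (\<Sum>xs\<in>paths T. path_prob d0 P \<pi> \<beta> \<pi>O \<theta> xs *
          partial i (\<lambda>v. partial j (\<lambda>w. ln (path_prob d0 P \<pi> \<beta> \<pi>O w xs)) v) \<theta>)"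

end

(* Only the option switches depend on the parameter, so the Hessian of the log-likelihood of a
   path is the sum over its steps of the Hessians of ln q, where q is the switching probability
   at that step. In expectation, step t contributes the law of the state-option pair at time t
   integrated against the Fisher information of one switch, which the identity
   sum q d_i d_j ln q = - sum d_i q d_j q / q evaluates to - d_i ln beta * d_j ln (1 - beta + beta pi_O).
   Dividing by T leaves the Cesaro averages of these laws, which converge to the stationary
   distribution because the chain of state-option pairs is irreducible. *)

theory Submission
  imports Defs
begin

section \<open>Finite Markov chains\<close>

lemma kpow_nonneg: "(\<forall>x y. 0 \<le> K x y) \<Longrightarrow> 0 \<le> kpow K n x y"
  by (induction n arbitrary: y) (auto intro!: sum_nonneg)

definition marginal :: "('x::finite \<Rightarrow> real) \<Rightarrow> ('x \<Rightarrow> 'x \<Rightarrow> real) \<Rightarrow> nat \<Rightarrow> 'x \<Rightarrow> real" where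
  "marginal p0 K t y = (\<Sum>x\<in>UNIV. p0 x * kpow K t x y)"

lemma marginal_0 [simp]: "marginal p0 K 0 = p0"
proof
  fix y
  have "marginal p0 K 0 y = (\<Sum>x\<in>UNIV. if x = y then p0 y else 0)"
    unfolding marginal_def by (intro sum.cong) auto
  then show "marginal p0 K 0 y = p0 y" by simp
qed

lemma marginal_Suc: "marginal p0 K (Suc t) y = (\<Sum>z\<in>UNIV. marginal p0 K t z * K z y)"
proof -
  have "marginal p0 K (Suc t) y = (\<Sum>x\<in>UNIV. \<Sum>z\<in>UNIV. p0 x * kpow K t x z * K z y)"
    by (simp add: marginal_def sum_distrib_left mult.assoc)
  also have "\<dots> = (\<Sum>z\<in>UNIV. \<Sum>x\<in>UNIV. p0 x * kpow K t x z * K z y)"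
    by (rule sum.swap)
  finally show ?thesis by (simp add: marginal_def sum_distrib_right)
qed

lemma marginal_invariant:
  assumes "\<forall>y. (\<Sum>x\<in>UNIV. v x * K x y) = v y"
  shows "marginal v K t = v"
  by (induction t) (simp_all add: fun_eq_iff marginal_Suc assms)

lemma prob_dist_marginal:
  assumes K: "stochastic_kernel K" and p0: "prob_dist p0"
  shows "prob_dist (marginal p0 K t)"
proof (induction t)
  case 0
  then show ?case using p0 by simp
next
  case (Suc t)
  have nonneg: "0 \<le> marginal p0 K (Suc t) y" for y
    unfolding marginal_Suc
    by (intro sum_nonneg mult_nonneg_nonneg) (use K Suc in \<open>auto simp: stochastic_kernel_def prob_dist_def\<close>)
  have "(\<Sum>y\<in>UNIV. marginal p0 K (Suc t) y) = (\<Sum>z\<in>UNIV. marginal p0 K t z * (\<Sum>y\<in>UNIV. K z y))"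
    unfolding marginal_Suc by (subst sum.swap) (simp add: sum_distrib_left)
  also have "\<dots> = 1"
    using K Suc by (simp add: stochastic_kernel_def prob_dist_def)
  finally show ?case using nonneg unfolding prob_dist_def by blast
qed

lemma stationary_dist_pos:
  assumes nonneg: "\<forall>x y. 0 \<le> K x y" and irr: "irreducible_chain K" and st: "stationary_dist K mu"
  shows "0 < mu y"
proof -
  have mu_nonneg: "\<forall>x. 0 \<le> mu x" and mu_sum: "(\<Sum>x\<in>UNIV. mu x) = 1"
    and mu_inv: "\<forall>y. (\<Sum>x\<in>UNIV. mu x * K x y) = mu y"
    using st unfolding stationary_dist_def prob_dist_def by auto
  obtain x where x: "0 < mu x"
  proof (rule ccontr)
    assume "\<not> thesis"
    then have "(\<Sum>x\<in>UNIV. mu x) \<le> 0"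
      using that by (intro sum_nonpos) (meson not_less)
    then show False using mu_sum by simp
  qed
  obtain n where n: "0 < kpow K n x y"
    using irr unfolding irreducible_chain_def by blast
  have "mu x * kpow K n x y \<le> (\<Sum>z\<in>UNIV. mu z * kpow K n z y)"
    by (rule member_le_sum) (use mu_nonneg in \<open>auto intro!: mult_nonneg_nonneg kpow_nonneg nonneg\<close>)
  also have "\<dots> = mu y"
    using marginal_invariant[OF mu_inv] by (simp add: marginal_def fun_eq_iff)
  finally show ?thesis
    using mult_pos_pos[OF x n] by linarith
qed

lemma invariant_nonneg_eq_0:
  assumes nonneg: "\<forall>x y. 0 \<le> K x y" and irr: "irreducible_chain K"
    and l_inv: "\<forall>y. (\<Sum>x\<in>UNIV. l x * K x y) = l y" and l_nonneg: "\<And>x. 0 \<le> l x" and l_x0: "l x0 = 0"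
  shows "l x = 0"
proof -
  obtain n where n: "0 < kpow K n x x0"
    using irr unfolding irreducible_chain_def by blast
  have "l x * kpow K n x x0 \<le> (\<Sum>z\<in>UNIV. l z * kpow K n z x0)"
    by (rule member_le_sum) (auto intro!: mult_nonneg_nonneg l_nonneg kpow_nonneg nonneg)
  also have "\<dots> = 0"
    using marginal_invariant[OF l_inv] l_x0 by (simp add: marginal_def fun_eq_iff)
  finally show ?thesis
    using n l_nonneg[of x] by (simp add: mult_le_0_iff)
qed

text \<open>Subtracting from \<open>v\<close> the largest multiple of \<open>mu\<close> below it leaves an invariant nonnegative
  vector with a zero.\<close>

lemma invariant_sum_zero_eq_0:
  assumes nonneg: "\<forall>x y. 0 \<le> K x y" and irr: "irreducible_chain K" and st: "stationary_dist K mu"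
    and v_inv: "\<forall>y. (\<Sum>x\<in>UNIV. v x * K x y) = v y" and v_sum: "(\<Sum>x\<in>UNIV. v x) = 0"
  shows "v x = 0"
proof -
  have mu_sum: "(\<Sum>x\<in>UNIV. mu x) = 1" and mu_inv: "\<forall>y. (\<Sum>x\<in>UNIV. mu x * K x y) = mu y"
    using st unfolding stationary_dist_def prob_dist_def by auto
  have mu_pos: "0 < mu y" for y
    using stationary_dist_pos[OF nonneg irr st] .
  define m where "m = Min (range (\<lambda>x. v x / mu x))"
  have "m \<in> range (\<lambda>x. v x / mu x)"
    unfolding m_def by (rule Min_in) auto
  then obtain x0 where x0: "v x0 / mu x0 = m" by blast
  define l where "l x = v x - m * mu x" for x
  have l_nonneg: "0 \<le> l x" for x
  proof -
    have "m \<le> v x / mu x"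
      unfolding m_def by (rule Min_le) auto
    then show ?thesis
      using mu_pos[of x] unfolding l_def by (simp add: field_simps)
  qed
  have l_x0: "l x0 = 0"
    using x0 mu_pos[of x0] unfolding l_def by (simp add: field_simps)
  have l_inv: "\<forall>y. (\<Sum>x\<in>UNIV. l x * K x y) = l y"
  proof
    fix y
    have "(\<Sum>x\<in>UNIV. l x * K x y) = (\<Sum>x\<in>UNIV. v x * K x y) - m * (\<Sum>x\<in>UNIV. mu x * K x y)"
      by (simp add: l_def left_diff_distrib sum_subtractf sum_distrib_left mult.assoc)
    then show "(\<Sum>x\<in>UNIV. l x * K x y) = l y"
      using v_inv mu_inv by (simp add: l_def)
  qed
  have l_zero: "l x = 0" for x
    using invariant_nonneg_eq_0[OF nonneg irr l_inv l_nonneg l_x0] .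
  have "0 = (\<Sum>x\<in>UNIV. l x)"
    using l_zero by simp
  also have "\<dots> = (\<Sum>x\<in>UNIV. v x) - m * (\<Sum>x\<in>UNIV. mu x)"
    by (simp add: l_def sum_subtractf sum_distrib_left)
  finally have "m = 0"
    using v_sum mu_sum by simp
  then show ?thesis using l_zero[of x] by (simp add: l_def)
qed

definition stationarity_defect ::
  "('x::finite \<Rightarrow> 'x \<Rightarrow> real) \<Rightarrow> ('x \<Rightarrow> real) \<Rightarrow> ('x \<Rightarrow> real) \<Rightarrow> 'x \<Rightarrow> real" where
  "stationarity_defect K mu v z = (\<Sum>x\<in>UNIV. v x * K x z) - v z + (\<Sum>x\<in>UNIV. v x) * mu z"

lemma stationarity_defect_eq_0:
  assumes K: "stochastic_kernel K" and irr: "irreducible_chain K" and st: "stationary_dist K mu"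
    and defect: "\<And>z. stationarity_defect K mu v z = 0"
  shows "v x = 0"
proof -
  have nonneg: "\<forall>x y. 0 \<le> K x y" and row_sum: "\<And>x. (\<Sum>y\<in>UNIV. K x y) = 1"
    using K unfolding stochastic_kernel_def by auto
  have mu_sum: "(\<Sum>x\<in>UNIV. mu x) = 1"
    using st unfolding stationary_dist_def prob_dist_def by auto
  have "(\<Sum>z\<in>UNIV. \<Sum>x\<in>UNIV. v x * K x z) = (\<Sum>x\<in>UNIV. v x)"
    by (subst sum.swap) (simp add: sum_distrib_left[symmetric] row_sum)
  moreover have "(\<Sum>z\<in>UNIV. stationarity_defect K mu v z) = 0"
    using defect by simp
  ultimately have "(\<Sum>x\<in>UNIV. v x) * (\<Sum>z\<in>UNIV. mu z) = 0"
    by (simp add: stationarity_defect_def sum.distrib sum_subtractf sum_distrib_left[symmetric])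
  then have v_sum: "(\<Sum>x\<in>UNIV. v x) = 0"
    using mu_sum by simp
  have v_inv: "\<forall>z. (\<Sum>x\<in>UNIV. v x * K x z) = v z"
  proof
    fix z
    show "(\<Sum>x\<in>UNIV. v x * K x z) = v z"
      using defect[of z] unfolding stationarity_defect_def v_sum by simp
  qed
  show ?thesis
    by (rule invariant_sum_zero_eq_0[OF nonneg irr st v_inv v_sum])
qed

lemma stationarity_defect_bounded_below:
  fixes K :: "'x::finite \<Rightarrow> 'x \<Rightarrow> real"
  assumes K: "stochastic_kernel K" and irr: "irreducible_chain K" and st: "stationary_dist K mu"
  obtains B where "0 < B" and "\<And>v y. \<bar>v y\<bar> \<le> B * (\<Sum>z\<in>UNIV. \<bar>stationarity_defect K mu v z\<bar>)"
proof -
  define f :: "real^'x \<Rightarrow> real^'x"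
    where "f v = (\<chi> z. stationarity_defect K mu (($) v) z)" for v
  have lin: "linear f"
    by (rule linearI)
       (simp_all add: f_def stationarity_defect_def vec_eq_iff sum.distrib algebra_simps sum_distrib_left)
  have "inj f"
    unfolding linear_injective_0[OF lin]
  proof (intro allI impI)
    fix v assume "f v = 0"
    then have "stationarity_defect K mu (($) v) z = 0" for z
      by (simp add: f_def vec_eq_iff)
    then have "v $ x = 0" for x
      by (rule stationarity_defect_eq_0[OF K irr st])
    then show "v = 0"
      by (simp add: vec_eq_iff)
  qed
  then obtain B0 where B0: "0 < B0" "\<And>v. B0 * norm v \<le> norm (f v)"
    using linear_inj_bounded_below_pos[OF lin] by blast
  show thesis
  proof (rule that[of "1 / B0"])
    show "0 < 1 / B0" using B0(1) by simp
    fix v :: "'x \<Rightarrow> real" and y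
    define w where "w = (\<chi> x. v x)"
    have "B0 * \<bar>v y\<bar> \<le> B0 * norm w"
      using B0(1) component_le_norm_cart[of w y] by (simp add: w_def)
    also have "\<dots> \<le> norm (f w)" by (rule B0(2))
    also have "\<dots> \<le> (\<Sum>z\<in>UNIV. \<bar>f w $ z\<bar>)" by (rule norm_le_l1_cart)
    also have "\<dots> = (\<Sum>z\<in>UNIV. \<bar>stationarity_defect K mu v z\<bar>)"
      by (simp add: f_def w_def vec_lambda_inverse)
    finally show "\<bar>v y\<bar> \<le> 1 / B0 * (\<Sum>z\<in>UNIV. \<bar>stationarity_defect K mu v z\<bar>)"
      using B0(1) by (simp add: pos_le_divide_eq mult.commute)
  qed
qed

lemma prob_dist_le_1: "prob_dist p \<Longrightarrow> p x \<le> 1"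
  unfolding prob_dist_def by (metis UNIV_I finite member_le_sum)

lemma stationarity_defect_marginal_average:
  assumes K: "stochastic_kernel K" and st: "stationary_dist K mu" and p0: "prob_dist p0" and T: "0 < T"
  defines "a \<equiv> \<lambda>x. (\<Sum>t<T. marginal p0 K t x) / real T"
  shows "stationarity_defect K mu (\<lambda>x. a x - mu x) z = (marginal p0 K T z - p0 z) / real T"
proof -
  have mu_sum: "(\<Sum>x\<in>UNIV. mu x) = 1" and mu_inv: "\<And>z. (\<Sum>x\<in>UNIV. mu x * K x z) = mu z"
    using st unfolding stationary_dist_def prob_dist_def by auto
  have "(\<Sum>x\<in>UNIV. a x) = (\<Sum>t<T. \<Sum>x\<in>UNIV. marginal p0 K t x) / real T"
    unfolding a_def by (subst sum.swap) (simp add: sum_divide_distrib)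
  then have a_sum: "(\<Sum>x\<in>UNIV. a x) = 1"
    using prob_dist_marginal[OF K p0] T by (simp add: prob_dist_def)
  have "(\<Sum>x\<in>UNIV. a x * K x z) = (\<Sum>t<T. \<Sum>x\<in>UNIV. marginal p0 K t x * K x z) / real T"
    unfolding a_def by (subst sum.swap) (simp add: sum_divide_distrib sum_distrib_right)
  also have "\<dots> = (\<Sum>t<T. marginal p0 K (Suc t) z) / real T"
    by (simp add: marginal_Suc)
  finally have "(\<Sum>x\<in>UNIV. (a x - mu x) * K x z) - (a z - mu z)
      = ((\<Sum>t<T. marginal p0 K (Suc t) z) - (\<Sum>t<T. marginal p0 K t z)) / real T"
    by (simp add: left_diff_distrib sum_subtractf mu_inv a_def diff_divide_distrib)
  also have "\<dots> = (marginal p0 K T z - p0 z) / real T"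
    using sum_lessThan_telescope[of "\<lambda>t. marginal p0 K t z" T] by (simp add: sum_subtractf)
  finally show ?thesis
    using a_sum mu_sum by (simp add: stationarity_defect_def sum_subtractf)
qed

lemma cesaro_marginal_tendsto_stationary:
  fixes K :: "'x::finite \<Rightarrow> 'x \<Rightarrow> real"
  assumes K: "stochastic_kernel K" and irr: "irreducible_chain K"
    and st: "stationary_dist K mu" and p0: "prob_dist p0"
  shows "(\<lambda>T. (\<Sum>t<T. marginal p0 K t y) / real T) \<longlonglongrightarrow> mu y"
proof -
  obtain B where B: "0 < B" and bounded: "\<And>v y. \<bar>v y\<bar> \<le> B * (\<Sum>z\<in>UNIV. \<bar>stationarity_defect K mu v z\<bar>)"
    using stationarity_defect_bounded_below[OF K irr st] by blast
  define a where "a T x = (\<Sum>t<T. marginal p0 K t x) / real T" for T x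
  have "\<bar>a T y - mu y\<bar> \<le> B * real CARD('x) * (1 / real T)" if T: "0 < T" for T
  proof -
    have "\<bar>a T y - mu y\<bar> \<le> B * (\<Sum>z\<in>UNIV. \<bar>(marginal p0 K T z - p0 z) / real T\<bar>)"
      using bounded[of "\<lambda>x. a T x - mu x" y]
      by (simp add: a_def stationarity_defect_marginal_average[OF K st p0 T])
    also have "\<dots> \<le> B * (\<Sum>z\<in>(UNIV::'x set). 1 / real T)"
    proof (intro mult_left_mono sum_mono)
      fix z
      have "\<bar>marginal p0 K T z - p0 z\<bar> \<le> 1"
        using prob_dist_marginal[OF K p0, of T] p0
          prob_dist_le_1[OF prob_dist_marginal[OF K p0], of T z] prob_dist_le_1[OF p0, of z]
        unfolding prob_dist_def abs_le_iff by (smt (verit))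
      then show "\<bar>(marginal p0 K T z - p0 z) / real T\<bar> \<le> 1 / real T"
        by (simp add: divide_right_mono)
    qed (use B in simp)
    finally show ?thesis by simp
  qed
  then have "(\<lambda>T. a T y - mu y) \<longlonglongrightarrow> 0"
    by (intro Lim_null_comparison[OF _ tendsto_mult_right_zero[OF lim_inverse_n']])
       (auto intro: eventually_mono[OF eventually_gt_at_top[of 0]])
  then show ?thesis
    unfolding a_def by (rule LIM_zero_cancel)
qed

section \<open>Additive path functionals\<close>

definition markov_path_prob :: "('x \<Rightarrow> real) \<Rightarrow> ('x \<Rightarrow> 'x \<Rightarrow> real) \<Rightarrow> 'x list \<Rightarrow> real" where
  "markov_path_prob p0 K xs = p0 (hd xs) * (\<Prod>t<length xs - 1. K (xs ! t) (xs ! Suc t))"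

definition path_sum :: "('x \<Rightarrow> 'x \<Rightarrow> real) \<Rightarrow> 'x list \<Rightarrow> real" where
  "path_sum g xs = (\<Sum>t<length xs - 1. g (xs ! t) (xs ! Suc t))"

lemma markov_path_prob_snoc:
  assumes "xs \<noteq> []"
  shows "markov_path_prob p0 K (xs @ [y]) = markov_path_prob p0 K xs * K (last xs) y"
proof -
  obtain n where n: "length xs = Suc n"
    using assms by (cases xs) auto
  have "(\<Prod>t<n. K ((xs @ [y]) ! t) ((xs @ [y]) ! Suc t)) = (\<Prod>t<n. K (xs ! t) (xs ! Suc t))"
    using n by (intro prod.cong) (auto simp: nth_append)
  moreover have "K ((xs @ [y]) ! n) ((xs @ [y]) ! Suc n) = K (last xs) y"
    using n assms by (simp add: nth_append last_conv_nth)
  ultimately show ?thesis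
    using n assms by (simp add: markov_path_prob_def mult.assoc)
qed

lemma path_sum_snoc:
  assumes "xs \<noteq> []"
  shows "path_sum g (xs @ [y]) = path_sum g xs + g (last xs) y"
proof -
  obtain n where n: "length xs = Suc n"
    using assms by (cases xs) auto
  have "(\<Sum>t<n. g ((xs @ [y]) ! t) ((xs @ [y]) ! Suc t)) = (\<Sum>t<n. g (xs ! t) (xs ! Suc t))"
    using n by (intro sum.cong) (auto simp: nth_append)
  moreover have "g ((xs @ [y]) ! n) ((xs @ [y]) ! Suc n) = g (last xs) y"
    using n assms by (simp add: nth_append last_conv_nth)
  ultimately show ?thesis
    using n by (simp add: path_sum_def)
qed

lemma paths_not_Nil: "xs \<in> paths T \<Longrightarrow> xs \<noteq> []"
  by (auto simp: paths_def)

lemma sum_paths_0: "(\<Sum>xs\<in>paths 0. F xs) = (\<Sum>x\<in>(UNIV::('s::finite \<times> 'o::finite) set). F [x])"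
proof -
  have "paths 0 = (\<lambda>x. [x]) ` (UNIV :: ('s \<times> 'o) set)"
    unfolding paths_def by (auto simp: length_Suc_conv)
  then show ?thesis
    by (simp add: sum.reindex inj_on_def)
qed

lemma paths_Suc: "paths (Suc T) = (\<lambda>(xs, y). xs @ [y]) ` (paths T \<times> (UNIV :: ('s \<times> 'o) set))"
proof -
  have "xs \<in> (\<lambda>(xs, y). xs @ [y]) ` (paths T \<times> UNIV)" if "length xs = Suc (Suc T)" for xs :: "('s \<times> 'o) list"
  proof -
    have "xs = butlast xs @ [last xs]"
      using that by (metis append_butlast_last_id list.size(3) nat.distinct(1))
    moreover have "butlast xs \<in> paths T"
      using that by (simp add: paths_def)
    ultimately show ?thesis
      by (metis (mono_tags, lifting) SigmaI UNIV_I case_prod_conv image_eqI)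
  qed
  then show ?thesis
    unfolding paths_def by auto
qed

lemma sum_paths_Suc:
  "(\<Sum>xs\<in>paths (Suc T). F xs) = (\<Sum>xs\<in>paths T. \<Sum>y\<in>(UNIV::('s::finite \<times> 'o::finite) set). F (xs @ [y]))"
proof -
  have "inj_on (\<lambda>(xs, y). xs @ [y]) (paths T \<times> (UNIV :: ('s \<times> 'o) set))"
    by (auto simp: inj_on_def)
  from sum.reindex[OF this, of F] show ?thesis
    unfolding paths_Suc by (simp add: sum.cartesian_product split_def)
qed

lemma sum_paths_last:
  fixes K :: "('s::finite \<times> 'o::finite) \<Rightarrow> ('s \<times> 'o) \<Rightarrow> real"
  shows "(\<Sum>xs\<in>paths T. markov_path_prob p0 K xs * f (last xs)) = (\<Sum>y\<in>UNIV. marginal p0 K T y * f y)"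
proof (induction T arbitrary: f)
  case 0
  then show ?case by (simp add: sum_paths_0 markov_path_prob_def)
next
  case (Suc T)
  have "(\<Sum>xs\<in>paths (Suc T). markov_path_prob p0 K xs * f (last xs))
      = (\<Sum>xs\<in>paths T. markov_path_prob p0 K xs * (\<Sum>y\<in>UNIV. K (last xs) y * f y))"
    by (simp add: sum_paths_Suc markov_path_prob_snoc paths_not_Nil sum_distrib_left mult.assoc
        cong: sum.cong)
  also have "\<dots> = (\<Sum>z\<in>UNIV. marginal p0 K T z * (\<Sum>y\<in>UNIV. K z y * f y))"
    by (rule Suc.IH)
  also have "\<dots> = (\<Sum>z\<in>UNIV. \<Sum>y\<in>UNIV. marginal p0 K T z * K z y * f y)"
    by (simp add: sum_distrib_left mult.assoc)
  also have "\<dots> = (\<Sum>y\<in>UNIV. \<Sum>z\<in>UNIV. marginal p0 K T z * K z y * f y)"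
    by (rule sum.swap)
  also have "\<dots> = (\<Sum>y\<in>UNIV. marginal p0 K (Suc T) y * f y)"
    by (simp add: marginal_Suc sum_distrib_right)
  finally show ?case .
qed

lemma sum_paths_path_sum:
  fixes K :: "('s::finite \<times> 'o::finite) \<Rightarrow> ('s \<times> 'o) \<Rightarrow> real"
  assumes row_sum: "\<And>x. (\<Sum>y\<in>UNIV. K x y) = 1"
  shows "(\<Sum>xs\<in>paths T. markov_path_prob p0 K xs * path_sum g xs)
     = (\<Sum>t<T. \<Sum>x\<in>UNIV. marginal p0 K t x * (\<Sum>y\<in>UNIV. K x y * g x y))"
proof (induction T)
  case 0
  then show ?case by (simp add: sum_paths_0 path_sum_def)
next
  case (Suc T)
  have "(\<Sum>xs\<in>paths (Suc T). markov_path_prob p0 K xs * path_sum g xs)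
      = (\<Sum>xs\<in>paths T. \<Sum>y\<in>UNIV.
          markov_path_prob p0 K xs * K (last xs) y * (path_sum g xs + g (last xs) y))"
    by (simp add: sum_paths_Suc markov_path_prob_snoc path_sum_snoc paths_not_Nil cong: sum.cong)
  also have "\<dots> = (\<Sum>xs\<in>paths T. markov_path_prob p0 K xs * path_sum g xs
      + markov_path_prob p0 K xs * (\<Sum>y\<in>UNIV. K (last xs) y * g (last xs) y))"
  proof (rule sum.cong[OF refl])
    fix xs
    have "(\<Sum>y\<in>UNIV. markov_path_prob p0 K xs * K (last xs) y * (path_sum g xs + g (last xs) y))
        = markov_path_prob p0 K xs * path_sum g xs * (\<Sum>y\<in>UNIV. K (last xs) y)
        + markov_path_prob p0 K xs * (\<Sum>y\<in>UNIV. K (last xs) y * g (last xs) y)"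
      by (simp add: sum.distrib sum_distrib_left distrib_left mult_ac)
    then show "(\<Sum>y\<in>UNIV. markov_path_prob p0 K xs * K (last xs) y * (path_sum g xs + g (last xs) y))
        = markov_path_prob p0 K xs * path_sum g xs
        + markov_path_prob p0 K xs * (\<Sum>y\<in>UNIV. K (last xs) y * g (last xs) y)"
      by (simp add: row_sum)
  qed
  also have "\<dots> = (\<Sum>xs\<in>paths T. markov_path_prob p0 K xs * path_sum g xs)
      + (\<Sum>x\<in>UNIV. marginal p0 K T x * (\<Sum>y\<in>UNIV. K x y * g x y))"
    by (simp add: sum.distrib sum_paths_last[where f = "\<lambda>z. \<Sum>y\<in>UNIV. K z y * g z y"])
  finally show ?case
    using Suc.IH by simp
qed

section \<open>Partial derivatives\<close>

definition has_partial :: "'n::finite \<Rightarrow> (real^'n \<Rightarrow> real) \<Rightarrow> real^'n \<Rightarrow> real \<Rightarrow> bool" where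
  "has_partial i f v d \<longleftrightarrow> ((\<lambda>t. f (v + t *\<^sub>R axis i 1)) has_real_derivative d) (at 0)"

lemma has_partial_imp_partial: "has_partial i f v d \<Longrightarrow> partial i f v = d"
  unfolding has_partial_def partial_def by (rule DERIV_imp_deriv)

lemma differentiable_imp_has_partial:
  assumes "f differentiable (at v)"
  shows "has_partial i f v (partial i f v)"
proof -
  obtain f' where f': "(f has_derivative f') (at v)"
    using assms unfolding differentiable_def by blast
  have line: "((\<lambda>t::real. v + t *\<^sub>R axis i 1) has_derivative (\<lambda>h. h *\<^sub>R axis i 1)) (at 0)"
    by (auto intro!: derivative_eq_intros)
  have "(f has_derivative f') (at ((\<lambda>t::real. v + t *\<^sub>R axis i 1) 0))"
    using f' by simp
  from diff_chain_at[OF line this]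
  have "((\<lambda>t. f (v + t *\<^sub>R axis i 1)) has_derivative (\<lambda>h. f' (h *\<^sub>R axis i 1))) (at 0)"
    by (simp add: comp_def)
  moreover have "(\<lambda>h. f' (h *\<^sub>R axis i 1)) = (*) (f' (axis i 1))"
  proof
    fix h :: real
    have "f' (h *\<^sub>R axis i 1) = h *\<^sub>R f' (axis i 1)"
      using has_derivative_linear[OF f'] by (rule linear_scale)
    then show "f' (h *\<^sub>R axis i 1) = f' (axis i 1) * h" by simp
  qed
  ultimately have "has_partial i f v (f' (axis i 1))"
    unfolding has_partial_def has_field_derivative_def by simp
  moreover from this have "partial i f v = f' (axis i 1)"
    by (rule has_partial_imp_partial)
  ultimately show ?thesis by simp
qed

lemma has_partial_const: "has_partial i (\<lambda>w. c) v 0"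
  unfolding has_partial_def by simp

lemma has_partial_add:
  "has_partial i f v d1 \<Longrightarrow> has_partial i g v d2 \<Longrightarrow> has_partial i (\<lambda>w. f w + g w) v (d1 + d2)"
  unfolding has_partial_def by (rule DERIV_add)

lemma has_partial_cmult: "has_partial i f v d \<Longrightarrow> has_partial i (\<lambda>w. c * f w) v (c * d)"
  unfolding has_partial_def by (rule DERIV_cmult)

lemma has_partial_divide:
  assumes "has_partial i f v d1" "has_partial i g v d2" "g v \<noteq> 0"
  shows "has_partial i (\<lambda>w. f w / g w) v ((d1 * g v - f v * d2) / (g v * g v))"
  using DERIV_divide[OF assms(1,2)[unfolded has_partial_def]] assms(3)
  unfolding has_partial_def by simp

lemma has_partial_ln:
  assumes "has_partial i f v d" "0 < f v"
  shows "has_partial i (\<lambda>w. ln (f w)) v (d / f v)"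
proof -
  have "(ln has_real_derivative 1 / f v) (at ((\<lambda>t. f (v + t *\<^sub>R axis i 1)) 0))"
    using DERIV_ln_divide[OF assms(2)] by simp
  from DERIV_chain2[OF this assms(1)[unfolded has_partial_def]] show ?thesis
    unfolding has_partial_def by simp
qed

lemma has_partial_sum:
  "finite A \<Longrightarrow> (\<And>a. a \<in> A \<Longrightarrow> has_partial i (f a) v (d a)) \<Longrightarrow>
    has_partial i (\<lambda>w. \<Sum>a\<in>A. f a w) v (\<Sum>a\<in>A. d a)"
  unfolding has_partial_def by (rule DERIV_sum)

section \<open>Option switching\<close>

text \<open>A step \<open>(s, \<omega>) \<rightarrow> (s', \<omega>')\<close> of the chain of pairs first switches from option \<open>\<omega>\<close> to \<open>\<omega>'\<close>
  in state \<open>s\<close> and then lets \<open>\<omega>'\<close> act in \<open>s\<close> to reach \<open>s'\<close>; only the switch depends on the parameter.\<close>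

definition switch_prob ::
  "('o \<Rightarrow> 's \<Rightarrow> real^'n \<Rightarrow> real) \<Rightarrow> ('s \<Rightarrow> 'o \<Rightarrow> real) \<Rightarrow> real^'n \<Rightarrow> 's \<times> 'o \<Rightarrow> 's \<times> 'o \<Rightarrow> real" where
  "switch_prob \<beta> \<pi>O w x y = opt_trans \<beta> \<pi>O w (snd x) (fst x) (snd y)"

definition move_prob ::
  "('s \<Rightarrow> 'a::finite \<Rightarrow> 's \<Rightarrow> real) \<Rightarrow> ('o \<Rightarrow> 's \<Rightarrow> 'a \<Rightarrow> real) \<Rightarrow> 's \<times> 'o \<Rightarrow> 's \<times> 'o \<Rightarrow> real" where
  "move_prob P \<pi> x y = (\<Sum>a\<in>UNIV. \<pi> (snd y) (fst x) a * P (fst x) a (fst y))"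

definition switch_slope :: "('s \<Rightarrow> 'o \<Rightarrow> real) \<Rightarrow> 's \<times> 'o \<Rightarrow> 's \<times> 'o \<Rightarrow> real" where
  "switch_slope \<pi>O x y = \<pi>O (fst x) (snd y) - (if snd y = snd x then 1 else 0)"

text \<open>The Hessian entry \<open>(i, j)\<close> of \<open>ln (switch_prob \<beta> \<pi>O w x y)\<close> at \<open>w = \<theta>\<close>.\<close>

definition switch_log_hessian ::
  "('o \<Rightarrow> 's \<Rightarrow> real^'n::finite \<Rightarrow> real) \<Rightarrow> ('s \<Rightarrow> 'o \<Rightarrow> real) \<Rightarrow> real^'n \<Rightarrow> 'n \<Rightarrow> 'n \<Rightarrow>
   's \<times> 'o \<Rightarrow> 's \<times> 'o \<Rightarrow> real" where
  "switch_log_hessian \<beta> \<pi>O \<theta> i j x y =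
    (switch_slope \<pi>O x y * partial i (partial j (\<beta> (snd x) (fst x))) \<theta> * switch_prob \<beta> \<pi>O \<theta> x y
      - switch_slope \<pi>O x y * partial j (\<beta> (snd x) (fst x)) \<theta> *
        (switch_slope \<pi>O x y * partial i (\<beta> (snd x) (fst x)) \<theta>))
    / (switch_prob \<beta> \<pi>O \<theta> x y * switch_prob \<beta> \<pi>O \<theta> x y)"

definition switch_information ::
  "('o \<Rightarrow> 's \<Rightarrow> real^'n::finite \<Rightarrow> real) \<Rightarrow> ('s \<Rightarrow> 'o \<Rightarrow> real) \<Rightarrow> real^'n \<Rightarrow> 'n \<Rightarrow> 'n \<Rightarrow> 's \<times> 'o \<Rightarrow> real" where
  "switch_information \<beta> \<pi>O \<theta> i j = (\<lambda>(s, \<omega>).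
    - (partial i (\<lambda>v. ln (\<beta> \<omega> s v)) \<theta> * partial j (\<lambda>v. ln (1 - \<beta> \<omega> s v + \<beta> \<omega> s v * \<pi>O s \<omega>)) \<theta>))"

lemma sum_UNIV_prod:
  "(\<Sum>y\<in>UNIV. F y) = (\<Sum>a\<in>UNIV. \<Sum>b\<in>UNIV. F (a, b))" for F :: "'a::finite \<times> 'b::finite \<Rightarrow> 'c::comm_monoid_add"
  by (simp add: sum.cartesian_product)

lemma pair_kernel_eq: "pair_kernel P \<pi> \<beta> \<pi>O w x y = switch_prob \<beta> \<pi>O w x y * move_prob P \<pi> x y"
  by (cases x; cases y) (simp add: pair_kernel_def switch_prob_def move_prob_def)

lemma switch_prob_eq:
  "switch_prob \<beta> \<pi>O w x y = (if snd y = snd x then 1 else 0) + \<beta> (snd x) (fst x) w * switch_slope \<pi>O x y"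
  by (simp add: switch_prob_def opt_trans_def switch_slope_def algebra_simps)

lemma init_pair_eq:
  "init_pair d0 P \<pi> \<pi>O (s', \<omega>) = (\<Sum>s\<in>UNIV. d0 s * \<pi>O s \<omega> * move_prob P \<pi> (s, \<omega>) (s', \<omega>))"
  by (simp add: init_pair_def move_prob_def)

lemma path_prob_eq_markov_path_prob:
  "path_prob d0 P \<pi> \<beta> \<pi>O w xs = markov_path_prob (init_pair d0 P \<pi> \<pi>O) (pair_kernel P \<pi> \<beta> \<pi>O w) xs"
  by (simp add: path_prob_def markov_path_prob_def)

text \<open>For the switching distribution \<open>q = \<delta>\<^sub>\<omega> + b (p - \<delta>\<^sub>\<omega>)\<close> one has
  \<open>\<Sum>\<^sub>\<omega>\<^sub>' q \<partial>\<^sub>i\<partial>\<^sub>j ln q = \<Sum>\<^sub>\<omega>\<^sub>' \<partial>\<^sub>i\<partial>\<^sub>j q - \<Sum>\<^sub>\<omega>\<^sub>' \<partial>\<^sub>i q \<partial>\<^sub>j q / q\<close>. The first sum vanishes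
  because \<open>q\<close> sums to one for every \<open>b\<close>; in the second, the options \<open>\<omega>' \<noteq> \<omega>\<close> contribute
  \<open>(1 - p \<omega>) / b\<close> and \<open>\<omega>\<close> itself \<open>(1 - p \<omega>)\<^sup>2 / q \<omega>\<close>.\<close>

lemma sum_switch_slope_sq_div:
  fixes p :: "'o::finite \<Rightarrow> real"
  assumes p: "prob_dist p" and b: "0 < b" and stay: "0 < 1 - b + b * p \<omega>"
  defines "B \<equiv> \<lambda>\<omega>'. p \<omega>' - (if \<omega>' = \<omega> then 1 else 0)"
    and "q \<equiv> \<lambda>\<omega>'. (if \<omega>' = \<omega> then 1 else 0) + b * (p \<omega>' - (if \<omega>' = \<omega> then 1 else 0))"
  shows "(\<Sum>\<omega>'\<in>UNIV. B \<omega>' * B \<omega>' / q \<omega>') = (1 - p \<omega>) / (b * (1 - b + b * p \<omega>))"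
proof -
  have "(\<Sum>\<omega>'\<in>UNIV. B \<omega>' * B \<omega>' / q \<omega>') = B \<omega> * B \<omega> / q \<omega> + (\<Sum>\<omega>'\<in>UNIV - {\<omega>}. B \<omega>' * B \<omega>' / q \<omega>')"
    by (rule sum.remove) auto
  also have "B \<omega> * B \<omega> / q \<omega> = (1 - p \<omega>) * (1 - p \<omega>) / (1 - b + b * p \<omega>)"
    by (simp add: B_def q_def algebra_simps)
  also have "(\<Sum>\<omega>'\<in>UNIV - {\<omega>}. B \<omega>' * B \<omega>' / q \<omega>') = (\<Sum>\<omega>'\<in>UNIV - {\<omega>}. p \<omega>') / b"
    unfolding sum_divide_distrib
    using b by (intro sum.cong) (auto simp: B_def q_def)
  also have "(\<Sum>\<omega>'\<in>UNIV - {\<omega>}. p \<omega>') = 1 - p \<omega>"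
    using p by (simp add: prob_dist_def sum_diff1)
  finally show ?thesis
    using b stay by (simp add: field_simps)
qed

lemma switch_information_identity:
  fixes p :: "'o::finite \<Rightarrow> real"
  assumes p: "prob_dist p" and b: "0 < b" and stay: "0 < 1 - b + b * p \<omega>"
  defines "B \<equiv> \<lambda>\<omega>'. p \<omega>' - (if \<omega>' = \<omega> then 1 else 0)"
    and "q \<equiv> \<lambda>\<omega>'. (if \<omega>' = \<omega> then 1 else 0) + b * (p \<omega>' - (if \<omega>' = \<omega> then 1 else 0))"
  shows "(\<Sum>\<omega>'\<in>UNIV. q \<omega>' * ((B \<omega>' * X * q \<omega>' - B \<omega>' * Y * (B \<omega>' * Z)) / (q \<omega>' * q \<omega>')))
    = (p \<omega> - 1) * Y * Z / (b * (1 - b + b * p \<omega>))"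
proof -
  have "q \<omega>' * ((B \<omega>' * X * q \<omega>' - B \<omega>' * Y * (B \<omega>' * Z)) / (q \<omega>' * q \<omega>'))
      = B \<omega>' * X - Y * Z * (B \<omega>' * B \<omega>' / q \<omega>')" for \<omega>'
  proof (cases "q \<omega>' = 0")
    case True
    then have "\<omega>' \<noteq> \<omega>"
      using stay by (auto simp: q_def B_def algebra_simps)
    then have "B \<omega>' = 0"
      using True b by (simp add: q_def B_def)
    then show ?thesis using True by simp
  next
    case False
    then show ?thesis by (simp add: field_simps)
  qed
  then have "(\<Sum>\<omega>'\<in>UNIV. q \<omega>' * ((B \<omega>' * X * q \<omega>' - B \<omega>' * Y * (B \<omega>' * Z)) / (q \<omega>' * q \<omega>')))
      = X * (\<Sum>\<omega>'\<in>UNIV. B \<omega>') - Y * Z * (\<Sum>\<omega>'\<in>UNIV. B \<omega>' * B \<omega>' / q \<omega>')"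
    by (simp add: sum_subtractf sum_distrib_left mult.commute)
  also have "(\<Sum>\<omega>'\<in>UNIV. B \<omega>') = 0"
    using p by (simp add: prob_dist_def B_def sum_subtractf)
  also have "(\<Sum>\<omega>'\<in>UNIV. B \<omega>' * B \<omega>' / q \<omega>') = (1 - p \<omega>) / (b * (1 - b + b * p \<omega>))"
    unfolding B_def q_def by (rule sum_switch_slope_sq_div[OF p b stay])
  finally show ?thesis
    by (simp add: minus_divide_left algebra_simps)
qed

locale option_model =
  fixes P :: "'s::finite \<Rightarrow> 'a::finite \<Rightarrow> 's \<Rightarrow> real"
    and d0 :: "'s \<Rightarrow> real"
    and \<pi> :: "'o::finite \<Rightarrow> 's \<Rightarrow> 'a \<Rightarrow> real"
    and \<beta> :: "'o \<Rightarrow> 's \<Rightarrow> real^'n::finite \<Rightarrow> real"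
    and \<pi>O :: "'s \<Rightarrow> 'o \<Rightarrow> real"
  assumes P_stoch: "stochastic_kernel (P s)"
    and d0_dist: "prob_dist d0"
    and \<pi>_stoch: "stochastic_kernel (\<pi> \<omega>)"
    and \<pi>O_stoch: "stochastic_kernel \<pi>O"
    and \<beta>_pos: "0 < \<beta> \<omega> s v"
    and stay_pos: "0 < 1 - \<beta> \<omega> s v + \<beta> \<omega> s v * \<pi>O s \<omega>"
    and \<beta>_diff: "\<beta> \<omega> s differentiable (at v)"
    and \<beta>_diff2: "partial k (\<beta> \<omega> s) differentiable (at v)"
begin

lemma \<pi>O_dist: "prob_dist (\<pi>O s)"
  using \<pi>O_stoch by (simp add: stochastic_kernel_def prob_dist_def)

lemma \<pi>O_nonneg: "0 \<le> \<pi>O s \<omega>"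
  using \<pi>O_dist by (simp add: prob_dist_def)

lemma move_prob_nonneg: "0 \<le> move_prob P \<pi> x y"
  using P_stoch \<pi>_stoch unfolding move_prob_def stochastic_kernel_def
  by (auto intro!: sum_nonneg mult_nonneg_nonneg)

lemma sum_move_prob: "(\<Sum>s'\<in>UNIV. move_prob P \<pi> x (s', \<omega>')) = 1"
proof -
  have "(\<Sum>s'\<in>UNIV. move_prob P \<pi> x (s', \<omega>')) = (\<Sum>a\<in>UNIV. \<pi> \<omega>' (fst x) a * (\<Sum>s'\<in>UNIV. P (fst x) a s'))"
    unfolding move_prob_def by (subst sum.swap) (simp add: sum_distrib_left)
  then show ?thesis
    using P_stoch \<pi>_stoch by (simp add: stochastic_kernel_def)
qed

lemma switch_prob_nonneg: "0 \<le> switch_prob \<beta> \<pi>O w x y"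
proof (cases "snd y = snd x")
  case True
  then show ?thesis
    using stay_pos by (simp add: switch_prob_def opt_trans_def less_imp_le)
next
  case False
  then show ?thesis
    using \<beta>_pos \<pi>O_nonneg by (simp add: switch_prob_def opt_trans_def less_imp_le)
qed

text \<open>Since \<open>\<beta> > 0\<close>, whether an option switch is possible does not depend on the parameter.\<close>

lemma switch_prob_pos:
  assumes "switch_prob \<beta> \<pi>O \<theta> x y \<noteq> 0"
  shows "0 < switch_prob \<beta> \<pi>O w x y"
proof (cases "snd y = snd x")
  case True
  then show ?thesis
    using stay_pos by (simp add: switch_prob_def opt_trans_def)
next
  case False
  then have "0 < \<pi>O (fst x) (snd y)"
    using assms \<pi>O_nonneg[of "fst x" "snd y"] by (simp add: switch_prob_def opt_trans_def order_less_le)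
  then show ?thesis
    using False \<beta>_pos by (simp add: switch_prob_def opt_trans_def)
qed

lemma sum_switch_prob: "(\<Sum>\<omega>'\<in>UNIV. switch_prob \<beta> \<pi>O w x (s', \<omega>')) = 1"
proof -
  have "(\<Sum>\<omega>'\<in>UNIV. switch_prob \<beta> \<pi>O w x (s', \<omega>'))
      = (\<Sum>\<omega>'\<in>UNIV. (1 - \<beta> (snd x) (fst x) w) * (if \<omega>' = snd x then 1 else 0))
        + \<beta> (snd x) (fst x) w * (\<Sum>\<omega>'\<in>UNIV. \<pi>O (fst x) \<omega>')"
    by (simp add: switch_prob_def opt_trans_def sum.distrib sum_distrib_left)
  also have "(\<Sum>\<omega>'\<in>UNIV. (1 - \<beta> (snd x) (fst x) w) * (if \<omega>' = snd x then 1 else 0))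
      = (\<Sum>\<omega>'\<in>UNIV. if \<omega>' = snd x then 1 - \<beta> (snd x) (fst x) w else 0)"
    by (intro sum.cong) auto
  finally show ?thesis
    using \<pi>O_dist by (simp add: prob_dist_def)
qed

lemma sum_pair_kernel_option:
  "(\<Sum>y\<in>UNIV. pair_kernel P \<pi> \<beta> \<pi>O w x y * h (snd y))
    = (\<Sum>\<omega>'\<in>UNIV. opt_trans \<beta> \<pi>O w (snd x) (fst x) \<omega>' * h \<omega>')"
proof -
  have "(\<Sum>y\<in>UNIV. pair_kernel P \<pi> \<beta> \<pi>O w x y * h (snd y))
      = (\<Sum>s'\<in>UNIV. \<Sum>\<omega>'\<in>UNIV. opt_trans \<beta> \<pi>O w (snd x) (fst x) \<omega>' * move_prob P \<pi> x (s', \<omega>') * h \<omega>')"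
    by (subst sum_UNIV_prod) (simp add: pair_kernel_eq switch_prob_def)
  also have "\<dots> = (\<Sum>\<omega>'\<in>UNIV. \<Sum>s'\<in>UNIV. opt_trans \<beta> \<pi>O w (snd x) (fst x) \<omega>' * move_prob P \<pi> x (s', \<omega>') * h \<omega>')"
    by (rule sum.swap)
  also have "\<dots> = (\<Sum>\<omega>'\<in>UNIV. opt_trans \<beta> \<pi>O w (snd x) (fst x) \<omega>' * h \<omega>' * (\<Sum>s'\<in>UNIV. move_prob P \<pi> x (s', \<omega>')))"
    by (simp add: sum_distrib_left mult_ac)
  finally show ?thesis
    by (simp add: sum_move_prob)
qed

lemma stochastic_pair_kernel: "stochastic_kernel (pair_kernel P \<pi> \<beta> \<pi>O w)"
proof -
  have "0 \<le> pair_kernel P \<pi> \<beta> \<pi>O w x y" for x y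
    unfolding pair_kernel_eq by (intro mult_nonneg_nonneg switch_prob_nonneg move_prob_nonneg)
  moreover have "(\<Sum>y\<in>UNIV. pair_kernel P \<pi> \<beta> \<pi>O w x y) = 1" for x
    using sum_pair_kernel_option[of w x "\<lambda>_. 1"] sum_switch_prob[of w x]
    by (simp add: switch_prob_def)
  ultimately show ?thesis
    by (simp add: stochastic_kernel_def)
qed

lemma prob_dist_init_pair: "prob_dist (init_pair d0 P \<pi> \<pi>O)"
proof -
  have d0_nonneg: "0 \<le> d0 s" and d0_sum: "(\<Sum>s\<in>UNIV. d0 s) = 1" for s
    using d0_dist by (auto simp: prob_dist_def)
  have nonneg: "0 \<le> init_pair d0 P \<pi> \<pi>O x" for x
    by (cases x) (simp add: init_pair_eq sum_nonneg d0_nonneg \<pi>O_nonneg move_prob_nonneg)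
  have "(\<Sum>x\<in>UNIV. init_pair d0 P \<pi> \<pi>O x)
      = (\<Sum>\<omega>\<in>UNIV. \<Sum>s\<in>UNIV. d0 s * \<pi>O s \<omega> * (\<Sum>s'\<in>UNIV. move_prob P \<pi> (s, \<omega>) (s', \<omega>)))"
    by (subst sum_UNIV_prod, subst sum.swap)
       (simp add: init_pair_eq sum_distrib_left, subst sum.swap, simp)
  also have "\<dots> = (\<Sum>s\<in>UNIV. d0 s * (\<Sum>\<omega>\<in>UNIV. \<pi>O s \<omega>))"
    by (subst sum.swap) (simp add: sum_move_prob sum_distrib_left)
  also have "\<dots> = 1"
    using \<pi>O_dist d0_sum by (simp add: prob_dist_def)
  finally show ?thesis
    using nonneg by (simp add: prob_dist_def)
qed

lemma has_partial_switch_prob: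
  "has_partial k (\<lambda>w. switch_prob \<beta> \<pi>O w x y) v (switch_slope \<pi>O x y * partial k (\<beta> (snd x) (fst x)) v)"
proof -
  have "has_partial k (\<lambda>w. (if snd y = snd x then 1 else 0) + switch_slope \<pi>O x y * \<beta> (snd x) (fst x) w) v
      (0 + switch_slope \<pi>O x y * partial k (\<beta> (snd x) (fst x)) v)"
    using \<beta>_diff by (intro has_partial_add has_partial_const has_partial_cmult differentiable_imp_has_partial) auto
  then show ?thesis
    by (simp add: switch_prob_eq mult.commute)
qed

lemma has_partial_ln_switch_prob:
  assumes "switch_prob \<beta> \<pi>O \<theta> x y \<noteq> 0"
  shows "has_partial k (\<lambda>w. ln (switch_prob \<beta> \<pi>O w x y)) v
    (switch_slope \<pi>O x y * partial k (\<beta> (snd x) (fst x)) v / switch_prob \<beta> \<pi>O v x y)"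
  by (rule has_partial_ln[OF has_partial_switch_prob switch_prob_pos[OF assms]])

lemma has_partial_switch_score:
  assumes "switch_prob \<beta> \<pi>O \<theta> x y \<noteq> 0"
  shows "has_partial i (\<lambda>v. switch_slope \<pi>O x y * partial j (\<beta> (snd x) (fst x)) v / switch_prob \<beta> \<pi>O v x y) \<theta>
    (switch_log_hessian \<beta> \<pi>O \<theta> i j x y)"
  unfolding switch_log_hessian_def
  using \<beta>_diff2 assms
  by (intro has_partial_divide has_partial_cmult has_partial_switch_prob differentiable_imp_has_partial) auto

lemma partial_ln_termination:
  "partial i (\<lambda>v. ln (\<beta> \<omega> s v)) \<theta> = partial i (\<beta> \<omega> s) \<theta> / \<beta> \<omega> s \<theta>"
  using \<beta>_diff \<beta>_pos
  by (intro has_partial_imp_partial has_partial_ln differentiable_imp_has_partial) auto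

lemma partial_ln_stay_prob:
  "partial j (\<lambda>v. ln (1 - \<beta> \<omega> s v + \<beta> \<omega> s v * \<pi>O s \<omega>)) \<theta>
    = (\<pi>O s \<omega> - 1) * partial j (\<beta> \<omega> s) \<theta> / (1 - \<beta> \<omega> s \<theta> + \<beta> \<omega> s \<theta> * \<pi>O s \<omega>)"
proof -
  have "has_partial j (\<lambda>v. 1 + (\<pi>O s \<omega> - 1) * \<beta> \<omega> s v) \<theta> (0 + (\<pi>O s \<omega> - 1) * partial j (\<beta> \<omega> s) \<theta>)"
    using \<beta>_diff by (intro has_partial_add has_partial_const has_partial_cmult differentiable_imp_has_partial) auto
  then have "has_partial j (\<lambda>v. ln (1 + (\<pi>O s \<omega> - 1) * \<beta> \<omega> s v)) \<theta>
      ((\<pi>O s \<omega> - 1) * partial j (\<beta> \<omega> s) \<theta> / (1 + (\<pi>O s \<omega> - 1) * \<beta> \<omega> s \<theta>))"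
    using stay_pos by (intro has_partial_ln) (auto simp: algebra_simps)
  then show ?thesis
    by (simp add: algebra_simps has_partial_imp_partial)
qed

lemma path_prob_nonzero:
  assumes "path_prob d0 P \<pi> \<beta> \<pi>O \<theta> xs \<noteq> 0"
  shows "0 < init_pair d0 P \<pi> \<pi>O (hd xs)"
    and "t < length xs - 1 \<Longrightarrow> switch_prob \<beta> \<pi>O \<theta> (xs ! t) (xs ! Suc t) \<noteq> 0"
    and "t < length xs - 1 \<Longrightarrow> 0 < move_prob P \<pi> (xs ! t) (xs ! Suc t)"
proof -
  have "init_pair d0 P \<pi> \<pi>O (hd xs) \<noteq> 0" and factors: "\<forall>t<length xs - 1.
      switch_prob \<beta> \<pi>O \<theta> (xs ! t) (xs ! Suc t) \<noteq> 0 \<and> move_prob P \<pi> (xs ! t) (xs ! Suc t) \<noteq> 0"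
    using assms by (auto simp: path_prob_def pair_kernel_eq)
  moreover have "0 \<le> init_pair d0 P \<pi> \<pi>O (hd xs)"
    using prob_dist_init_pair unfolding prob_dist_def by blast
  ultimately show "0 < init_pair d0 P \<pi> \<pi>O (hd xs)" by simp
  show "switch_prob \<beta> \<pi>O \<theta> (xs ! t) (xs ! Suc t) \<noteq> 0" if "t < length xs - 1"
    using factors[rule_format, OF that] by simp
  show "0 < move_prob P \<pi> (xs ! t) (xs ! Suc t)" if "t < length xs - 1"
    using factors[rule_format, OF that] move_prob_nonneg[of "xs ! t" "xs ! Suc t"] by simp
qed

lemma ln_path_prob_eq:
  assumes "path_prob d0 P \<pi> \<beta> \<pi>O \<theta> xs \<noteq> 0"
  shows "ln (path_prob d0 P \<pi> \<beta> \<pi>O w xs)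
    = ln (init_pair d0 P \<pi> \<pi>O (hd xs)) + path_sum (\<lambda>x y. ln (switch_prob \<beta> \<pi>O w x y)) xs
      + path_sum (\<lambda>x y. ln (move_prob P \<pi> x y)) xs"
proof -
  define n where "n = length xs - 1"
  define f where "f t = switch_prob \<beta> \<pi>O w (xs ! t) (xs ! Suc t) * move_prob P \<pi> (xs ! t) (xs ! Suc t)" for t
  have switch_pos: "0 < switch_prob \<beta> \<pi>O w (xs ! t) (xs ! Suc t)" if "t < n" for t
    using switch_prob_pos path_prob_nonzero(2)[OF assms] that unfolding n_def by blast
  have move_pos: "0 < move_prob P \<pi> (xs ! t) (xs ! Suc t)" if "t < n" for t
    using path_prob_nonzero(3)[OF assms] that unfolding n_def by blast
  have f_pos: "0 < f t" and f_nonzero: "f t \<noteq> 0" if "t < n" for t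
    using switch_pos[OF that] move_pos[OF that] by (simp_all add: f_def)
  have "ln (path_prob d0 P \<pi> \<beta> \<pi>O w xs) = ln (init_pair d0 P \<pi> \<pi>O (hd xs) * (\<Prod>t<n. f t))"
    by (simp add: path_prob_def pair_kernel_eq f_def n_def)
  also have "\<dots> = ln (init_pair d0 P \<pi> \<pi>O (hd xs)) + ln (\<Prod>t<n. f t)"
    using path_prob_nonzero(1)[OF assms] prod_pos[of "{..<n}" f] f_pos by (simp add: ln_mult_pos)
  also have "ln (\<Prod>t<n. f t) = (\<Sum>t<n. ln (f t))"
    using f_nonzero by (intro ln_prod) auto
  also have "(\<Sum>t<n. ln (f t))
      = path_sum (\<lambda>x y. ln (switch_prob \<beta> \<pi>O w x y)) xs + path_sum (\<lambda>x y. ln (move_prob P \<pi> x y)) xs"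
    using switch_pos move_pos by (simp add: f_def path_sum_def n_def ln_mult_pos sum.distrib)
  finally show ?thesis by simp
qed

lemma partial2_ln_path_prob:
  assumes "path_prob d0 P \<pi> \<beta> \<pi>O \<theta> xs \<noteq> 0"
  shows "partial i (\<lambda>v. partial j (\<lambda>w. ln (path_prob d0 P \<pi> \<beta> \<pi>O w xs)) v) \<theta>
    = path_sum (switch_log_hessian \<beta> \<pi>O \<theta> i j) xs"
proof -
  define score where "score v x y = switch_slope \<pi>O x y * partial j (\<beta> (snd x) (fst x)) v / switch_prob \<beta> \<pi>O v x y"
    for v x y
  have nonzero: "switch_prob \<beta> \<pi>O \<theta> (xs ! t) (xs ! Suc t) \<noteq> 0" if "t \<in> {..<length xs - 1}" for t
    using path_prob_nonzero(2)[OF assms] that by simp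
  have "has_partial j (\<lambda>w. ln (path_prob d0 P \<pi> \<beta> \<pi>O w xs)) v (0 + path_sum (score v) xs + 0)" for v
    unfolding ln_path_prob_eq[OF assms] path_sum_def score_def
    by (intro has_partial_add has_partial_const has_partial_sum has_partial_ln_switch_prob[where \<theta> = \<theta>] nonzero) auto
  then have "(\<lambda>v. partial j (\<lambda>w. ln (path_prob d0 P \<pi> \<beta> \<pi>O w xs)) v) = (\<lambda>v. path_sum (score v) xs)"
    by (simp add: fun_eq_iff has_partial_imp_partial)
  moreover have "has_partial i (\<lambda>v. path_sum (score v) xs) \<theta> (path_sum (switch_log_hessian \<beta> \<pi>O \<theta> i j) xs)"
    unfolding path_sum_def score_def by (intro has_partial_sum has_partial_switch_score nonzero) auto
  ultimately show ?thesis
    by (simp add: has_partial_imp_partial)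
qed

lemma expected_switch_log_hessian:
  "(\<Sum>y\<in>UNIV. pair_kernel P \<pi> \<beta> \<pi>O \<theta> (s, \<omega>) y * switch_log_hessian \<beta> \<pi>O \<theta> i j (s, \<omega>) y)
    = - switch_information \<beta> \<pi>O \<theta> i j (s, \<omega>)"
proof -
  define b where "b = \<beta> \<omega> s \<theta>"
  define B where "B \<omega>' = \<pi>O s \<omega>' - (if \<omega>' = \<omega> then 1 else 0)" for \<omega>'
  define q where "q \<omega>' = (if \<omega>' = \<omega> then 1 else 0) + b * (\<pi>O s \<omega>' - (if \<omega>' = \<omega> then 1 else 0))" for \<omega>'
  define X where "X = partial i (partial j (\<beta> \<omega> s)) \<theta>"
  define Y where "Y = partial j (\<beta> \<omega> s) \<theta>"
  define Z where "Z = partial i (\<beta> \<omega> s) \<theta>"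
  have b: "0 < b" and stay: "0 < 1 - b + b * \<pi>O s \<omega>"
    using \<beta>_pos stay_pos by (auto simp: b_def)
  have "switch_log_hessian \<beta> \<pi>O \<theta> i j (s, \<omega>) y
      = (B (snd y) * X * q (snd y) - B (snd y) * Y * (B (snd y) * Z)) / (q (snd y) * q (snd y))" for y
    by (simp add: switch_log_hessian_def switch_prob_eq switch_slope_def B_def q_def b_def X_def Y_def Z_def)
  moreover have "opt_trans \<beta> \<pi>O \<theta> \<omega> s \<omega>' = q \<omega>'" for \<omega>'
    by (simp add: opt_trans_def q_def b_def algebra_simps)
  ultimately have "(\<Sum>y\<in>UNIV. pair_kernel P \<pi> \<beta> \<pi>O \<theta> (s, \<omega>) y * switch_log_hessian \<beta> \<pi>O \<theta> i j (s, \<omega>) y)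
      = (\<Sum>\<omega>'\<in>UNIV. q \<omega>' * ((B \<omega>' * X * q \<omega>' - B \<omega>' * Y * (B \<omega>' * Z)) / (q \<omega>' * q \<omega>')))"
    by (simp only: sum_pair_kernel_option[of \<theta> "(s, \<omega>)" "\<lambda>\<omega>'. (B \<omega>' * X * q \<omega>' - B \<omega>' * Y * (B \<omega>' * Z)) / (q \<omega>' * q \<omega>')"] fst_conv snd_conv)
  also have "\<dots> = (\<pi>O s \<omega> - 1) * Y * Z / (b * (1 - b + b * \<pi>O s \<omega>))"
    unfolding B_def q_def by (rule switch_information_identity[OF \<pi>O_dist b stay])
  also have "\<dots> = - switch_information \<beta> \<pi>O \<theta> i j (s, \<omega>)"
  proof -
    have ln_termination: "partial i (\<lambda>v. ln (\<beta> \<omega> s v)) \<theta> = Z / b"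
      by (simp add: partial_ln_termination Z_def b_def)
    have ln_stay: "partial j (\<lambda>v. ln (1 - \<beta> \<omega> s v + \<beta> \<omega> s v * \<pi>O s \<omega>)) \<theta>
        = (\<pi>O s \<omega> - 1) * Y / (1 - b + b * \<pi>O s \<omega>)"
      by (simp add: partial_ln_stay_prob Y_def b_def)
    show ?thesis
      unfolding switch_information_def prod.case ln_termination ln_stay using b stay by (simp add: field_simps)
  qed
  finally show ?thesis .
qed

lemma fisher_fh_eq_sum_marginal:
  "fisher_fh d0 P \<pi> \<beta> \<pi>O T \<theta> i j = (\<Sum>t<T. \<Sum>x\<in>UNIV.
    marginal (init_pair d0 P \<pi> \<pi>O) (pair_kernel P \<pi> \<beta> \<pi>O \<theta>) t x * switch_information \<beta> \<pi>O \<theta> i j x)"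
proof -
  let ?p0 = "init_pair d0 P \<pi> \<pi>O" and ?K = "pair_kernel P \<pi> \<beta> \<pi>O \<theta>"
  have "path_prob d0 P \<pi> \<beta> \<pi>O \<theta> xs * partial i (\<lambda>v. partial j (\<lambda>w. ln (path_prob d0 P \<pi> \<beta> \<pi>O w xs)) v) \<theta>
      = markov_path_prob ?p0 ?K xs * path_sum (switch_log_hessian \<beta> \<pi>O \<theta> i j) xs" for xs
    unfolding path_prob_eq_markov_path_prob[symmetric]
    by (cases "path_prob d0 P \<pi> \<beta> \<pi>O \<theta> xs = 0") (simp_all add: partial2_ln_path_prob)
  then have "fisher_fh d0 P \<pi> \<beta> \<pi>O T \<theta> i j
      = - (\<Sum>xs\<in>paths T. markov_path_prob ?p0 ?K xs * path_sum (switch_log_hessian \<beta> \<pi>O \<theta> i j) xs)"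
    by (simp add: fisher_fh_def)
  also have "\<dots> = - (\<Sum>t<T. \<Sum>x\<in>UNIV. marginal ?p0 ?K t x * (\<Sum>y\<in>UNIV. ?K x y * switch_log_hessian \<beta> \<pi>O \<theta> i j x y))"
  proof -
    have "\<And>x. (\<Sum>y\<in>UNIV. ?K x y) = 1"
      using stochastic_pair_kernel[of \<theta>] unfolding stochastic_kernel_def by blast
    then show ?thesis
      by (simp only: sum_paths_path_sum)
  qed
  also have "\<dots> = (\<Sum>t<T. \<Sum>x\<in>UNIV. marginal ?p0 ?K t x * switch_information \<beta> \<pi>O \<theta> i j x)"
  proof -
    have "(\<Sum>y\<in>UNIV. ?K x y * switch_log_hessian \<beta> \<pi>O \<theta> i j x y) = - switch_information \<beta> \<pi>O \<theta> i j x" for x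
      using expected_switch_log_hessian[where s = "fst x" and \<omega> = "snd x"] by simp
    then show ?thesis
      by (simp add: sum_negf)
  qed
  finally show ?thesis .
qed

end

theorem theorem2:
  fixes P :: "'s::finite \<Rightarrow> 'a::finite \<Rightarrow> 's \<Rightarrow> real"
    and d0 :: "'s \<Rightarrow> real"
    and \<pi> :: "'o::finite \<Rightarrow> 's \<Rightarrow> 'a \<Rightarrow> real"
    and \<beta> :: "'o \<Rightarrow> 's \<Rightarrow> real^'n::finite \<Rightarrow> real"
    and \<pi>O :: "'s \<Rightarrow> 'o \<Rightarrow> real"
    and \<theta> :: "real^'n"
    and \<mu>O :: "'s \<times> 'o \<Rightarrow> real"
    and i j :: 'n
  assumes P_stoch: "\<forall>s. stochastic_kernel (P s)"
    and d0_dist: "prob_dist d0"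
    and \<pi>_stoch: "\<forall>\<omega>. stochastic_kernel (\<pi> \<omega>)"
    and \<pi>O_stoch: "stochastic_kernel \<pi>O"
    and \<beta>_range: "\<forall>\<omega> s v. 0 < \<beta> \<omega> s v \<and> \<beta> \<omega> s v \<le> 1"
    and log_finite: "\<forall>\<omega> s v. 0 < 1 - \<beta> \<omega> s v + \<beta> \<omega> s v * \<pi>O s \<omega>"
    and \<beta>_diff: "\<forall>\<omega> s v. \<beta> \<omega> s differentiable (at v)"
    and \<beta>_diff2: "\<forall>\<omega> s k v. partial k (\<beta> \<omega> s) differentiable (at v)"
    and irred: "irreducible_chain (pair_kernel P \<pi> \<beta> \<pi>O \<theta>)"
    and aperiodic: "aperiodic_chain (pair_kernel P \<pi> \<beta> \<pi>O \<theta>)"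
    and stat: "stationary_dist (pair_kernel P \<pi> \<beta> \<pi>O \<theta>) \<mu>O"
  shows "(\<lambda>T. fisher_fh d0 P \<pi> \<beta> \<pi>O T \<theta> i j / real T)
           \<longlonglongrightarrow>
         - (\<Sum>(s, \<omega>)\<in>UNIV. \<mu>O (s, \<omega>) *
              partial i (\<lambda>v. ln (\<beta> \<omega> s v)) \<theta> *
              partial j (\<lambda>v. ln (1 - \<beta> \<omega> s v + \<beta> \<omega> s v * \<pi>O s \<omega>)) \<theta>)"
proof -
  interpret M: option_model P d0 \<pi> \<beta> \<pi>O
    by unfold_locales (use P_stoch d0_dist \<pi>_stoch \<pi>O_stoch \<beta>_range log_finite \<beta>_diff \<beta>_diff2 in auto)
  let ?p0 = "init_pair d0 P \<pi> \<pi>O" and ?K = "pair_kernel P \<pi> \<beta> \<pi>O \<theta>"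
  have average: "fisher_fh d0 P \<pi> \<beta> \<pi>O T \<theta> i j / real T
      = (\<Sum>x\<in>UNIV. (\<Sum>t<T. marginal ?p0 ?K t x) / real T * switch_information \<beta> \<pi>O \<theta> i j x)" for T
    unfolding M.fisher_fh_eq_sum_marginal
    by (subst sum.swap) (simp add: sum_divide_distrib sum_distrib_right)
  have "(\<lambda>T. (\<Sum>t<T. marginal ?p0 ?K t x) / real T) \<longlonglongrightarrow> \<mu>O x" for x
    using M.stochastic_pair_kernel irred stat M.prob_dist_init_pair
    by (rule cesaro_marginal_tendsto_stationary)
  then have "(\<lambda>T. fisher_fh d0 P \<pi> \<beta> \<pi>O T \<theta> i j / real T)
      \<longlonglongrightarrow> (\<Sum>x\<in>UNIV. \<mu>O x * switch_information \<beta> \<pi>O \<theta> i j x)"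
    unfolding average by (intro tendsto_intros)
  then show ?thesis
    by (simp add: switch_information_def split_def sum_negf[symmetric] mult.assoc)
qed

end
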